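(* For every non-zero integer $n$, the torsion subgroup of the Mordell–Weil group $E_n(\mathbb{Q})$ is isomorphic to $\mathbb{Z}/2\mathbb{Z}$, where $E_n$ is the elliptic curve $y^2 = x^3 + 2nx^2 - n^2x$.
   Context: $E_n$ is the quadratic twist by $n$ of the elliptic curve $E_1 : y^2 = x^3 + 2x^2 - x$ (conductor $128$). *)

theory Defs
  imports Complex_Main "HOL-Algebra.Elementary_Groups"
begin

datatype point = Inf | Pt rat rat

definition on_curve :: "rat \<Rightarrow> rat \<Rightarrow> point \<Rightarrow> bool" where
  "on_curve a b P = (case P of Inf \<Rightarrow> True
                      | Pt x y \<Rightarrow> y^2 = x^3 + a * x^2 + b * x)"

definition pt_add :: "rat \<Rightarrow> rat \<Rightarrow> point \<Rightarrow> point \<Rightarrow> point" where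
  "pt_add a b P Q = (case P of Inf \<Rightarrow> Q | Pt x1 y1 \<Rightarrow>
      (case Q of Inf \<Rightarrow> P | Pt x2 y2 \<Rightarrow>
        (if x1 = x2 \<and> y1 = - y2 then Inf
         else (let l = (if x1 = x2 then (3 * x1^2 + 2 * a * x1 + b) / (2 * y1)
                        else (y2 - y1) / (x2 - x1));
                   x3 = l^2 - a - x1 - x2
               in Pt x3 (- (y1 + l * (x3 - x1)))))))"

definition mw_group :: "rat \<Rightarrow> rat \<Rightarrow> point monoid" where
  "mw_group a b = \<lparr> carrier = {P. on_curve a b P}, mult = pt_add a b, one = Inf \<rparr>"

definition torsion_subgroup :: "('a, 'b) monoid_scheme \<Rightarrow> ('a, 'b) monoid_scheme" where
  "torsion_subgroup G = G \<lparr> carrier := {P \<in> carrier G. \<exists>k::nat. k > 0 \<and> P [^]\<^bsub>G\<^esub> k = \<one>\<^bsub>G\<^esub>} \<rparr>"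

definition E :: "int \<Rightarrow> point monoid" where
  "E n = mw_group (2 * of_int n) (- ((of_int n :: rat) ^ 2))"

end

theory Submission
  imports Defs "HOL-Computational_Algebra.Primes"
begin

text \<open>The only rational points of \<open>E\<^sub>n\<close> with \<open>x = 0\<close> are \<open>O\<close> and the 2-torsion point
  \<open>(0,0)\<close>. The composite of the 2-isogeny out of \<open>E\<^sub>n\<close> with the 2-isogeny out of its image and a
  rescaling is an endomorphism \<open>\<psi> = \<plusminus>[2]\<close> of \<open>E\<^sub>n\<close> which, on points with \<open>x \<noteq> 0\<close>, strictly
  lowers \<open>min(v\<^sub>2(x), v\<^sub>2(n))\<close>. So if \<open>P\<close> with \<open>x(P) \<noteq> 0\<close> had order dividing \<open>k\<close>, some
  \<open>\<psi>\<^sup>j(P)\<close> would be a \<open>k\<close>-torsion point with \<open>v\<^sub>2(x) \<le> -2k\<close>. Such a point lies in the level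
  \<open>N \<ge> k\<close> of the 2-adic formal group filtration, where \<open>t = x/y\<close> satisfies
  \<open>t(kQ) \<equiv> k t(Q) mod 2\<^sup>3\<^sup>N\<close>; as \<open>v\<^sub>2(k t(Q)) = v\<^sub>2(k) + N < 3N\<close>, \<open>kQ \<noteq> O\<close>.\<close>

section \<open>\<open>p\<close>-adic valuations on \<open>\<rat>\<close>\<close>

definition rat_val :: "int \<Rightarrow> rat \<Rightarrow> int" where
  "rat_val p q = (case quotient_of q of (a, b) \<Rightarrow> int (multiplicity p a) - int (multiplicity p b))"

text \<open>\<open>val_ge p q k\<close> means \<open>q \<in> p\<^sup>k \<int>\<^sub>(\<^sub>p\<^sub>)\<close>; it holds for \<open>q = 0\<close>, whose valuation is
  \<open>\<infinity>\<close>, although \<open>rat_val p 0 = 0\<close>.\<close>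

definition val_ge :: "int \<Rightarrow> rat \<Rightarrow> int \<Rightarrow> bool" where
  "val_ge p q k \<longleftrightarrow> q = 0 \<or> k \<le> rat_val p q"

lemma rat_int_fraction:
  fixes q :: rat
  obtains a b where "q = of_int a / of_int b" "b \<noteq> 0" "q \<noteq> 0 \<Longrightarrow> a \<noteq> 0"
proof -
  obtain a b where ab: "quotient_of q = (a, b)" by (cases "quotient_of q") auto
  show ?thesis using that[of a b] quotient_of_div[OF ab] quotient_of_denom_pos[OF ab] by auto
qed

locale prime_valuation =
  fixes p :: int
  assumes prime_p: "prime p"
begin

lemma multiplicity_mult_int:
  "a \<noteq> 0 \<Longrightarrow> b \<noteq> 0 \<Longrightarrow> multiplicity p (a * b) = multiplicity p a + multiplicity p b"
  by (rule prime_elem_multiplicity_mult_distrib[OF prime_imp_prime_elem[OF prime_p]])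

lemma rat_val_of_int_divide:
  assumes "a \<noteq> 0" "b \<noteq> 0"
  shows "rat_val p (of_int a / of_int b) = int (multiplicity p a) - int (multiplicity p b)"
proof -
  obtain c d where cd: "quotient_of (of_int a / of_int b) = (c, d)"
    by (cases "quotient_of (of_int a / of_int b)") auto
  have d: "d > 0" using quotient_of_denom_pos[OF cd] .
  have eq: "(of_int a / of_int b :: rat) = of_int c / of_int d" using quotient_of_div[OF cd] .
  have c: "c \<noteq> 0" using eq assms d by auto
  have "(of_int (a * d) :: rat) = of_int (c * b)" using eq assms d by (simp add: field_simps)
  then have "a * d = c * b" by (simp only: of_int_eq_iff)
  then have "multiplicity p a + multiplicity p d = multiplicity p c + multiplicity p b"
    using multiplicity_mult_int assms c d by (metis less_irrefl)
  then show ?thesis unfolding rat_val_def cd by simp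
qed

lemma rat_val_of_int: "z \<noteq> 0 \<Longrightarrow> rat_val p (of_int z) = int (multiplicity p z)"
  using rat_val_of_int_divide[of z 1] by simp

lemma rat_val_1 [simp]: "rat_val p 1 = 0"
  using rat_val_of_int[of 1] by simp

lemma rat_val_self: "rat_val p (of_int p) = 1"
  using rat_val_of_int[of p] multiplicity_self[of p] prime_gt_1_int[OF prime_p] by simp

lemma rat_val_mult:
  assumes "x \<noteq> 0" "y \<noteq> 0"
  shows "rat_val p (x * y) = rat_val p x + rat_val p y"
proof -
  obtain a b where x: "x = of_int a / of_int b" "b \<noteq> 0" "a \<noteq> 0"
    using rat_int_fraction[of x] assms by metis
  obtain c d where y: "y = of_int c / of_int d" "d \<noteq> 0" "c \<noteq> 0"
    using rat_int_fraction[of y] assms by metis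
  have xy: "x * y = of_int (a * c) / of_int (b * d)" using x y by simp
  have "rat_val p (x * y) = int (multiplicity p (a * c)) - int (multiplicity p (b * d))"
    unfolding xy using x y by (intro rat_val_of_int_divide) auto
  then show ?thesis using x y rat_val_of_int_divide multiplicity_mult_int by simp
qed

lemma rat_val_inverse: "rat_val p (inverse x) = - rat_val p x"
proof (cases "x = 0")
  case True
  then show ?thesis by (simp add: rat_val_def)
next
  case False
  then obtain a b where x: "x = of_int a / of_int b" "b \<noteq> 0" "a \<noteq> 0"
    using rat_int_fraction[of x] by metis
  then have "inverse x = of_int b / of_int a" by simp
  then show ?thesis using x rat_val_of_int_divide by simp
qed

lemma rat_val_divide: "x \<noteq> 0 \<Longrightarrow> y \<noteq> 0 \<Longrightarrow> rat_val p (x / y) = rat_val p x - rat_val p y"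
  by (simp add: divide_inverse rat_val_mult rat_val_inverse)

lemma rat_val_power: "x \<noteq> 0 \<Longrightarrow> rat_val p (x ^ k) = int k * rat_val p x"
  by (induction k) (auto simp: rat_val_mult algebra_simps)

lemma rat_val_uminus [simp]: "rat_val p (- x) = rat_val p x"
proof (cases "x = 0")
  case False
  have "rat_val p (-1) = 0"
    using rat_val_of_int[of "-1"] multiplicity_unit_right[of "-1::int" p] by simp
  then show ?thesis using rat_val_mult[of "-1" x] False by simp
qed simp

lemma rat_val_of_nat_less: "0 < k \<Longrightarrow> rat_val p (of_nat k) < int k"
proof -
  assume k: "0 < k"
  define m where "m = multiplicity p (int k)"
  have "rat_val p (of_nat k) = int m"
    unfolding m_def using rat_val_of_int[of "int k"] k by simp
  moreover have "p ^ m \<le> int k"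
    unfolding m_def using k by (intro zdvd_imp_le multiplicity_dvd) auto
  moreover have "int m < 2 ^ m"
    using less_exp[of m] by (metis of_nat_less_iff of_nat_numeral of_nat_power)
  moreover have "(2::int) ^ m \<le> p ^ m"
    using prime_ge_2_int[OF prime_p] by (simp add: power_mono)
  ultimately show ?thesis by linarith
qed

lemma rat_val_add:
  assumes "x \<noteq> 0" "y \<noteq> 0" "x + y \<noteq> 0"
  shows "min (rat_val p x) (rat_val p y) \<le> rat_val p (x + y)"
proof -
  obtain a b where x: "x = of_int a / of_int b" "b \<noteq> 0" "a \<noteq> 0"
    using rat_int_fraction[of x] assms by metis
  obtain c d where y: "y = of_int c / of_int d" "d \<noteq> 0" "c \<noteq> 0"
    using rat_int_fraction[of y] assms by metis
  have sum: "x + y = of_int (a * d + c * b) / of_int (b * d)"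
    using x y by (simp add: field_simps)
  have num: "a * d + c * b \<noteq> 0"
    using sum assms(3) by (metis div_0 of_int_0)
  define m where "m = min (multiplicity p (a * d)) (multiplicity p (c * b))"
  have "p ^ m dvd a * d" "p ^ m dvd c * b"
    unfolding m_def by (rule multiplicity_dvd'; simp)+
  then have "m \<le> multiplicity p (a * d + c * b)"
    using num prime_p by (intro multiplicity_geI) (auto simp: prime_elem_not_unit)
  moreover have "rat_val p (x + y) = int (multiplicity p (a * d + c * b)) - int (multiplicity p (b * d))"
    unfolding sum using x y num by (intro rat_val_of_int_divide) auto
  ultimately show ?thesis
    using x y rat_val_of_int_divide multiplicity_mult_int unfolding m_def by auto
qed

lemma rat_val_add_dominant:
  assumes "x \<noteq> 0" "y \<noteq> 0" "rat_val p x < rat_val p y"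
  shows "rat_val p (x + y) = rat_val p x" "x + y \<noteq> 0"
proof -
  show sum: "x + y \<noteq> 0"
    using assms by (metis add.inverse_unique less_irrefl rat_val_uminus)
  have "min (rat_val p x) (rat_val p y) \<le> rat_val p (x + y)"
    using rat_val_add assms sum by blast
  moreover have "min (rat_val p (x + y)) (rat_val p (- y)) \<le> rat_val p (x + y + - y)"
    using rat_val_add[of "x + y" "- y"] assms sum by simp
  ultimately show "rat_val p (x + y) = rat_val p x"
    using assms by (auto simp: min_def split: if_splits)
qed

lemma val_ge_0 [simp]: "val_ge p 0 k"
  by (simp add: val_ge_def)

lemma val_ge_rat_val: "val_ge p x (rat_val p x)"
  by (simp add: val_ge_def)

lemma val_ge_mono: "val_ge p x k \<Longrightarrow> l \<le> k \<Longrightarrow> val_ge p x l"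
  by (auto simp: val_ge_def)

lemma val_ge_uminus: "val_ge p x k \<Longrightarrow> val_ge p (- x) k"
  by (auto simp: val_ge_def)

lemma val_ge_add:
  assumes "val_ge p x k" "val_ge p y k"
  shows "val_ge p (x + y) k"
proof (cases "x = 0 \<or> y = 0 \<or> x + y = 0")
  case False
  then have "min (rat_val p x) (rat_val p y) \<le> rat_val p (x + y)" using rat_val_add by blast
  then show ?thesis using assms False by (auto simp: val_ge_def)
qed (use assms in auto)

lemma val_ge_diff: "val_ge p x k \<Longrightarrow> val_ge p y k \<Longrightarrow> val_ge p (x - y) k"
  using val_ge_add[of x k "- y"] val_ge_uminus by simp

lemma val_ge_mult: "val_ge p x k \<Longrightarrow> val_ge p y l \<Longrightarrow> val_ge p (x * y) (k + l)"
  by (cases "x = 0 \<or> y = 0") (auto simp: val_ge_def rat_val_mult)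

lemma val_ge_of_int: "val_ge p (of_int z) 0"
  by (cases "z = 0") (simp_all add: val_ge_def rat_val_of_int)

lemma val_ge_add_dominant:
  assumes "x \<noteq> 0" "val_ge p y (rat_val p x + 1)"
  shows "rat_val p (x + y) = rat_val p x" "x + y \<noteq> 0"
  using assms rat_val_add_dominant[of x y] by (cases "y = 0"; auto simp: val_ge_def)+

lemma one_plus_unit:
  assumes "val_ge p z 1"
  shows "rat_val p (1 + z) = 0" "1 + z \<noteq> 0"
  using val_ge_add_dominant[of 1 z] assms by simp_all

lemma val_ge_divide_unit:
  "val_ge p x k \<Longrightarrow> u \<noteq> 0 \<Longrightarrow> rat_val p u = 0 \<Longrightarrow> val_ge p (x / u) k"
  by (cases "x = 0") (auto simp: val_ge_def rat_val_divide)

end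

section \<open>Curves \<open>y\<^sup>2 = x\<^sup>3 + a x\<^sup>2 + b x\<close>\<close>

text \<open>The cubic \<open>x\<^sup>3 + a x\<^sup>2 + b x\<close> has \<open>0\<close> as its only rational root, and a simple one:
  the curve is nonsingular and \<open>(0,0)\<close> is its only rational point of order 2.\<close>

definition two_torsion_only_origin :: "rat \<Rightarrow> rat \<Rightarrow> bool" where
  "two_torsion_only_origin a b \<longleftrightarrow> b \<noteq> 0 \<and> (\<forall>x. x^2 + a*x + b \<noteq> 0)"

text \<open>\<open>x\<^sub>1, x\<^sub>2, x\<^sub>3\<close> are the roots, with multiplicity, of \<open>x\<^sup>3 + a x\<^sup>2 + b x - (l x + v)\<^sup>2\<close>,
  i.e. the abscissae of the three intersections of the line \<open>y = l x + v\<close> with the curve.\<close>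

definition line_roots :: "rat \<Rightarrow> rat \<Rightarrow> rat \<Rightarrow> rat \<Rightarrow> rat \<Rightarrow> rat \<Rightarrow> rat \<Rightarrow> bool" where
  "line_roots a b l v x1 x2 x3 \<longleftrightarrow>
     x1 + x2 + x3 = l^2 - a \<and> x1*x2 + x1*x3 + x2*x3 = b - 2*l*v \<and> x1*x2*x3 = v^2"

lemma on_curve_Inf [simp]: "on_curve a b Inf"
  by (simp add: on_curve_def)

lemma on_curve_Pt: "on_curve a b (Pt x y) \<longleftrightarrow> y^2 = x^3 + a*x^2 + b*x"
  by (simp add: on_curve_def)

lemma pt_add_Inf_left [simp]: "pt_add a b Inf Q = Q"
  by (simp add: pt_add_def)

lemma pt_add_Inf_right [simp]: "pt_add a b P Inf = P"
  by (cases P) (simp_all add: pt_add_def)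

lemma pt_add_opposite: "pt_add a b (Pt x y) (Pt x (- y)) = Inf"
  by (simp add: pt_add_def)

lemma pt_add_chord:
  assumes "x1 \<noteq> x2" "l = (y2 - y1) / (x2 - x1)"
  shows "pt_add a b (Pt x1 y1) (Pt x2 y2) = Pt (l^2 - a - x1 - x2) (- (y1 + l * ((l^2 - a - x1 - x2) - x1)))"
  using assms by (simp add: pt_add_def Let_def)

lemma pt_add_tangent:
  assumes "y1 \<noteq> 0" "l = (3*x1^2 + 2*a*x1 + b) / (2*y1)"
  shows "pt_add a b (Pt x1 y1) (Pt x1 y1) = Pt (l^2 - a - x1 - x1) (- (y1 + l * ((l^2 - a - x1 - x1) - x1)))"
  using assms by (simp add: pt_add_def Let_def)

lemma line_roots_on_curve:
  "line_roots a b l v x1 x2 x3 \<Longrightarrow> (l*x3 + v)^2 = x3^3 + a*x3^2 + b*x3"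
  unfolding line_roots_def by (elim conjE) algebra

lemma chord_line_roots:
  assumes c1: "y1^2 = x1^3 + a*x1^2 + b*x1" and c2: "y2^2 = x2^3 + a*x2^2 + b*x2"
    and ne: "x1 \<noteq> x2" and l: "l = (y2 - y1) / (x2 - x1)" and v: "v = y1 - l*x1"
  shows "line_roots a b l v x1 x2 (l^2 - a - x1 - x2)"
proof -
  have d: "x2 - x1 \<noteq> 0" using ne by simp
  have hl: "l * (x2 - x1) = y2 - y1" using d unfolding l by simp
  have "(x1*x2 + x1*(l^2 - a - x1 - x2) + x2*(l^2 - a - x1 - x2) - (b - 2*l*v)) * (x2 - x1) = 0"
    using c1 c2 hl unfolding v by algebra
  moreover have "(x1*x2*(l^2 - a - x1 - x2) - v^2) * (x2 - x1) = 0"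
    using c1 c2 hl unfolding v by algebra
  ultimately show ?thesis using d unfolding line_roots_def by simp
qed

lemma tangent_line_roots:
  assumes c1: "y1^2 = x1^3 + a*x1^2 + b*x1" and y1: "y1 \<noteq> 0"
    and l: "l = (3*x1^2 + 2*a*x1 + b) / (2*y1)" and v: "v = y1 - l*x1"
  shows "line_roots a b l v x1 x1 (l^2 - a - x1 - x1)"
proof -
  have hl: "l * (2*y1) = 3*x1^2 + 2*a*x1 + b" using y1 unfolding l by simp
  have "(x1*x1 + x1*(l^2 - a - x1 - x1) + x1*(l^2 - a - x1 - x1) - (b - 2*l*v)) * (2*y1) = 0"
    using c1 hl unfolding v by algebra
  moreover have "(x1*x1*(l^2 - a - x1 - x1) - v^2) * (2*y1) = 0"
    using c1 hl unfolding v by algebra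
  ultimately show ?thesis using y1 unfolding line_roots_def by simp
qed

lemma pt_add_line:
  assumes c1: "y1^2 = x1^3 + a*x1^2 + b*x1" and c2: "y2^2 = x2^3 + a*x2^2 + b*x2"
    and not_opp: "\<not> (x1 = x2 \<and> y1 = - y2)"
  obtains l v x3 where "y1 = l*x1 + v" "y2 = l*x2 + v" "line_roots a b l v x1 x2 x3"
    "pt_add a b (Pt x1 y1) (Pt x2 y2) = Pt x3 (- (l*x3 + v))"
proof (cases "x1 = x2")
  case False
  define l where "l = (y2 - y1) / (x2 - x1)"
  define v where "v = y1 - l*x1"
  show ?thesis
  proof (rule that)
    show "y1 = l*x1 + v" unfolding v_def by simp
    have "l * (x2 - x1) = y2 - y1" using False unfolding l_def by simp
    then show "y2 = l*x2 + v" unfolding v_def by algebra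
    show "line_roots a b l v x1 x2 (l^2 - a - x1 - x2)"
      by (rule chord_line_roots[OF c1 c2 False l_def v_def])
    show "pt_add a b (Pt x1 y1) (Pt x2 y2) =
        Pt (l^2 - a - x1 - x2) (- (l * (l^2 - a - x1 - x2) + v))"
      unfolding pt_add_chord[OF False l_def] v_def by (simp add: algebra_simps)
  qed
next
  case True
  then have "y1^2 = y2^2" using c1 c2 by simp
  then have "y1 = y2 \<or> y1 = - y2" by (simp add: power2_eq_iff)
  then have y2: "y2 = y1" and y1: "y1 \<noteq> 0" using not_opp True by auto
  define l where "l = (3*x1^2 + 2*a*x1 + b) / (2*y1)"
  define v where "v = y1 - l*x1"
  show ?thesis
  proof (rule that)
    show "y1 = l*x1 + v" "y2 = l*x2 + v" unfolding v_def True y2 by simp_all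
    show "line_roots a b l v x1 x2 (l^2 - a - x1 - x1)"
      using tangent_line_roots[OF c1 y1 l_def v_def] unfolding True .
    show "pt_add a b (Pt x1 y1) (Pt x2 y2) =
        Pt (l^2 - a - x1 - x1) (- (l * (l^2 - a - x1 - x1) + v))"
      unfolding True[symmetric] y2 pt_add_tangent[OF y1 l_def] v_def by (simp add: algebra_simps)
  qed
qed

lemma pt_add_line_roots:
  assumes ns: "two_torsion_only_origin a b" and c1: "y1^2 = x1^3 + a*x1^2 + b*x1"
    and l1: "y1 = l*x1 + v" and l2: "y2 = l*x2 + v" and roots: "line_roots a b l v x1 x2 x3"
  shows "pt_add a b (Pt x1 y1) (Pt x2 y2) = Pt x3 (- (l*x3 + v))"
proof -
  have e1: "x1 + x2 + x3 = l^2 - a" and e2: "x1*x2 + x1*x3 + x2*x3 = b - 2*l*v"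
    using roots unfolding line_roots_def by simp_all
  show ?thesis
  proof (cases "x1 = x2")
    case False
    have slope: "l = (y2 - y1) / (x2 - x1)" using False l1 l2 by (simp add: field_simps)
    have "l^2 - a - x1 - x2 = x3" using e1 by simp
    then show ?thesis unfolding pt_add_chord[OF False slope] by (simp add: l1 algebra_simps)
  next
    case True
    have y2: "y2 = y1" using True l1 l2 by simp
    have der: "3*x1^2 + 2*a*x1 + b = 2*l*y1" using e1 e2 True l1 by algebra
    have y1: "y1 \<noteq> 0"
    proof
      assume "y1 = 0"
      then have "x1 * (x1^2 + a*x1 + b) = 0" and "3*x1^2 + 2*a*x1 + b = 0"
        using c1 der by (auto simp: algebra_simps power2_eq_square power3_eq_cube)
      then show False using ns unfolding two_torsion_only_origin_def by (cases "x1 = 0") auto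
    qed
    have slope: "l = (3*x1^2 + 2*a*x1 + b) / (2*y1)" using der y1 by (simp add: field_simps)
    have "l^2 - a - x1 - x1 = x3" using e1 True by simp
    then show ?thesis
      unfolding True[symmetric] y2 pt_add_tangent[OF y1 slope] by (simp add: l1 algebra_simps)
  qed
qed

lemma on_curve_pt_add:
  assumes "on_curve a b P" "on_curve a b Q"
  shows "on_curve a b (pt_add a b P Q)"
proof (cases P)
  case (Pt x1 y1)
  show ?thesis
  proof (cases Q)
    case (Pt x2 y2)
    show ?thesis
    proof (cases "x1 = x2 \<and> y1 = - y2")
      case False
      have "y1^2 = x1^3 + a*x1^2 + b*x1" "y2^2 = x2^3 + a*x2^2 + b*x2"
        using assms \<open>P = Pt x1 y1\<close> Pt by (simp_all add: on_curve_Pt)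
      then obtain l v x3 where "y1 = l*x1 + v" "y2 = l*x2 + v" "line_roots a b l v x1 x2 x3"
        "pt_add a b (Pt x1 y1) (Pt x2 y2) = Pt x3 (- (l*x3 + v))"
        using False by (rule pt_add_line)
      moreover have "on_curve a b (Pt x3 (- (l*x3 + v)))"
        unfolding on_curve_Pt power2_minus by (rule line_roots_on_curve) fact
      ultimately show ?thesis using \<open>P = Pt x1 y1\<close> Pt by simp
    qed (use \<open>P = Pt x1 y1\<close> Pt in \<open>simp add: pt_add_def\<close>)
  qed (use assms in simp)
qed (use assms in simp)

lemma mw_group_one [simp]: "one (mw_group a b) = Inf"
  by (simp add: mw_group_def)

lemma mw_group_mult [simp]: "monoid.mult (mw_group a b) P Q = pt_add a b P Q"
  by (simp add: mw_group_def)

lemma mw_group_carrier [simp]: "carrier (mw_group a b) = {P. on_curve a b P}"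
  by (simp add: mw_group_def)

lemma mw_group_pow_0 [simp]: "pow (mw_group a b) P (0::nat) = Inf"
  by (simp add: mw_group_def)

lemma mw_group_pow_Suc: "pow (mw_group a b) P (Suc k) = pt_add a b (pow (mw_group a b) P k) P"
  by (simp add: mw_group_def)

lemma on_curve_pow: "on_curve a b P \<Longrightarrow> on_curve a b (pow (mw_group a b) P (k::nat))"
  by (induction k) (simp_all add: mw_group_pow_Suc on_curve_pt_add)

subsection \<open>The 2-isogeny with kernel \<open>{O, (0,0)}\<close>\<close>

text \<open>Silverman, Example III.4.5: it maps \<open>y\<^sup>2 = x\<^sup>3 + a x\<^sup>2 + b x\<close>
  to \<open>y\<^sup>2 = x\<^sup>3 - 2a x\<^sup>2 + (a\<^sup>2 - 4b) x\<close>.\<close>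

definition isog2 :: "rat \<Rightarrow> point \<Rightarrow> point" where
  "isog2 b P = (case P of Inf \<Rightarrow> Inf
     | Pt x y \<Rightarrow> if x = 0 then Inf else Pt (y^2/x^2) (y*(x^2 - b)/x^2))"

lemma isog2_Inf [simp]: "isog2 b Inf = Inf"
  by (simp add: isog2_def)

lemma on_curve_isog2:
  assumes "on_curve a b P"
  shows "on_curve (-2*a) (a^2 - 4*b) (isog2 b P)"
proof (cases P)
  case (Pt x y)
  show ?thesis
  proof (cases "x = 0")
    case False
    define X where "X = y^2/x^2"
    define Y where "Y = y*(x^2 - b)/x^2"
    have hX: "X*x^2 = y^2" and hY: "Y*x^2 = y*(x^2 - b)"
      unfolding X_def Y_def using False by simp_all
    have "y^2 = x^3 + a*x^2 + b*x" using assms Pt by (simp add: on_curve_Pt)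
    then have "(Y^2 - (X^3 + (-2*a)*X^2 + (a^2 - 4*b)*X)) * x^6 = 0"
      using hX hY by algebra
    then show ?thesis
      using Pt False unfolding isog2_def X_def Y_def by (simp add: on_curve_Pt)
  qed (simp add: Pt isog2_def)
qed simp

lemma two_torsion_only_origin_isog2:
  assumes ns: "two_torsion_only_origin a b" and nonsquare: "\<forall>x. x^2 \<noteq> b"
  shows "two_torsion_only_origin (-2*a) (a^2 - 4*b)"
proof -
  have "a^2 - 4*b \<noteq> 0"
  proof
    assume "a^2 - 4*b = 0"
    then have "(-a/2)^2 + a*(-a/2) + b = 0" by (simp add: field_simps power2_eq_square)
    then show False using ns unfolding two_torsion_only_origin_def by blast
  qed
  moreover have "x^2 + (-2*a)*x + (a^2 - 4*b) \<noteq> 0" for x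
  proof
    assume "x^2 + (-2*a)*x + (a^2 - 4*b) = 0"
    then have "(x - a)^2 = 4*b" by algebra
    then have "((x - a)/2)^2 = b" by (simp add: power_divide)
    then show False using nonsquare by blast
  qed
  ultimately show ?thesis unfolding two_torsion_only_origin_def by blast
qed

lemma isog2_origin_line:
  "x \<noteq> 0 \<Longrightarrow> y = l*x \<Longrightarrow> isog2 b (Pt x y) = Pt (l^2) (l * (x^2 - b) / x)"
  by (simp add: isog2_def power_mult_distrib power2_eq_square)

lemma isog2_pt_add_origin_line:
  assumes b: "b \<noteq> 0" and roots: "line_roots a b l 0 x1 x2 x3" and not_both: "x1 \<noteq> 0 \<or> x2 \<noteq> 0"
  shows "isog2 b (Pt x3 (- (l*x3))) =
    pt_add (-2*a) (a^2 - 4*b) (isog2 b (Pt x1 (l*x1))) (isog2 b (Pt x2 (l*x2)))"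
proof -
  have prod: "x1*x2*x3 = 0" and pairs: "x1*x2 + x1*x3 + x2*x3 = b"
    using roots unfolding line_roots_def by simp_all
  have flip: "x \<noteq> 0" "y \<noteq> 0" "l * (y^2 - b) / y = - (l * (x^2 - b) / x)"
    if "x*y = b" for x y l
    using that[symmetric] b by (auto simp: field_simps power2_eq_square)
  consider "x1 = 0" | "x1 \<noteq> 0" "x2 = 0" | "x1 \<noteq> 0" "x2 \<noteq> 0" "x3 = 0"
    using prod by auto
  then show ?thesis
  proof cases
    case 1
    then have "x2*x3 = b" using pairs by simp
    then show ?thesis
      using 1 flip[of x2 x3] isog2_origin_line[of x3 "- (l*x3)" "-l"] isog2_origin_line[of x2 "l*x2" l]
      by (simp add: isog2_def)
  next
    case 2
    then have "x1*x3 = b" using pairs by simp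
    then show ?thesis
      using 2 flip[of x1 x3] isog2_origin_line[of x3 "- (l*x3)" "-l"] isog2_origin_line[of x1 "l*x1" l]
      by (simp add: isog2_def)
  next
    case 3
    then have "x1*x2 = b" using pairs by simp
    then show ?thesis
      using 3 flip[of x1 x2] isog2_origin_line[of x1 "l*x1" l] isog2_origin_line[of x2 "l*x2" l]
      by (simp add: isog2_def pt_add_opposite[of _ _ "l^2" "l * ((x1^2 - b) / x1)", simplified])
  qed
qed

text \<open>Off the origin, \<open>isog2\<close> maps the line \<open>y = l x + v\<close> to \<open>Y = L X + M\<close> with
  \<open>L = (v l - b)/v\<close>, \<open>M = (v\<^sup>2 - a v l + b l\<^sup>2)/v\<close>, and the images of the three intersection
  points are the three intersections of the image line.\<close>

lemma isog2_on_line: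
  fixes a b l v x y :: rat
  assumes c: "y^2 = x^3 + a*x^2 + b*x" and line: "y = l*x + v" and x: "x \<noteq> 0" and v: "v \<noteq> 0"
  shows "y*(x^2 - b)/x^2 = ((v*l - b)/v) * (y^2/x^2) + (v^2 - a*v*l + b*l^2)/v"
proof -
  have "v*y*(x^2 - b) = (v*l - b)*y^2 + (v^2 - a*v*l + b*l^2)*x^2"
    using c line by algebra
  then have "v*y*(x^2 - b)/(v*x^2) = ((v*l - b)*y^2 + (v^2 - a*v*l + b*l^2)*x^2)/(v*x^2)"
    by simp
  then show ?thesis using x v by (simp add: add_divide_distrib)
qed

text \<open>\<open>r\<^sub>i = y\<^sub>i/x\<^sub>i\<close> is the slope of the line from \<open>(0,0)\<close> to the \<open>i\<close>-th intersection point, and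
  \<open>isog2\<close> sends that point to one with abscissa \<open>r\<^sub>i\<^sup>2\<close>.\<close>

lemma origin_slopes_symmetric:
  fixes a b l v x1 x2 x3 :: rat
  assumes roots: "line_roots a b l v x1 x2 x3"
    and x1: "x1 \<noteq> 0" and x2: "x2 \<noteq> 0" and x3: "x3 \<noteq> 0" and v: "v \<noteq> 0"
  defines "r1 \<equiv> (l*x1 + v)/x1" and "r2 \<equiv> (l*x2 + v)/x2" and "r3 \<equiv> (l*x3 + v)/x3"
  shows "r1 + r2 + r3 = l + b/v" "r1*r2 + r1*r3 + r2*r3 = 2*l*b/v - a"
    "r1*r2*r3 = (v^2 - a*v*l + b*l^2)/v"
proof -
  have e1: "x1 + x2 + x3 = l^2 - a" and e2: "x1*x2 + x1*x3 + x2*x3 = b - 2*l*v"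
    and e3: "x1*x2*x3 = v^2"
    using roots unfolding line_roots_def by simp_all
  have "(r1 + r2 + r3)*(x1*x2*x3) = 3*l*(x1*x2*x3) + v*(x1*x2 + x1*x3 + x2*x3)"
    unfolding r1_def r2_def r3_def using x1 x2 x3 by (simp add: field_simps)
  then have "(r1 + r2 + r3)*v^2 = 3*l*v^2 + v*(b - 2*l*v)" using e2 e3 by simp
  then have "((r1 + r2 + r3)*v - (l*v + b))*v = 0" by algebra
  then have "(r1 + r2 + r3)*v = l*v + b" using v by simp
  then show "r1 + r2 + r3 = l + b/v" using v by (simp add: field_simps)
  have "(r1*r2 + r1*r3 + r2*r3)*(x1*x2*x3)
      = 3*l^2*(x1*x2*x3) + 2*l*v*(x1*x2 + x1*x3 + x2*x3) + v^2*(x1 + x2 + x3)"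
    unfolding r1_def r2_def r3_def using x1 x2 x3 by (simp add: field_simps, algebra)
  then have "(r1*r2 + r1*r3 + r2*r3)*v^2 = 3*l^2*v^2 + 2*l*v*(b - 2*l*v) + v^2*(l^2 - a)"
    using e1 e2 e3 by simp
  then have "((r1*r2 + r1*r3 + r2*r3)*v - (2*l*b - a*v))*v = 0" by algebra
  then have "(r1*r2 + r1*r3 + r2*r3)*v = 2*l*b - a*v" using v by simp
  then show "r1*r2 + r1*r3 + r2*r3 = 2*l*b/v - a" using v by (simp add: field_simps)
  have "(r1*r2*r3)*(x1*x2*x3) = (l*x1 + v)*(l*x2 + v)*(l*x3 + v)"
    unfolding r1_def r2_def r3_def using x1 x2 x3 by (simp add: field_simps)
  also have "\<dots> = v*(v^2 - a*v*l + b*l^2)" using e1 e2 e3 by algebra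
  finally have "(r1*r2*r3)*v^2 = v*(v^2 - a*v*l + b*l^2)" using e3 by simp
  then have "((r1*r2*r3)*v - (v^2 - a*v*l + b*l^2))*v = 0" by algebra
  then have "(r1*r2*r3)*v = v^2 - a*v*l + b*l^2" using v by simp
  then show "r1*r2*r3 = (v^2 - a*v*l + b*l^2)/v" using v by (simp add: field_simps)
qed

lemma isog2_line_roots:
  fixes a b l v x1 x2 x3 :: rat
  assumes roots: "line_roots a b l v x1 x2 x3"
    and x1: "x1 \<noteq> 0" and x2: "x2 \<noteq> 0" and x3: "x3 \<noteq> 0" and v: "v \<noteq> 0"
  shows "line_roots (-2*a) (a^2 - 4*b) ((v*l - b)/v) ((v^2 - a*v*l + b*l^2)/v)
           ((l*x1 + v)^2/x1^2) ((l*x2 + v)^2/x2^2) ((l*x3 + v)^2/x3^2)"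
proof -
  define r1 where "r1 = (l*x1 + v)/x1"
  define r2 where "r2 = (l*x2 + v)/x2"
  define r3 where "r3 = (l*x3 + v)/x3"
  note sym = origin_slopes_symmetric[OF roots x1 x2 x3 v, folded r1_def r2_def r3_def]
  have "(l*x1 + v)^2/x1^2 = r1^2" "(l*x2 + v)^2/x2^2 = r2^2" "(l*x3 + v)^2/x3^2 = r3^2"
    by (simp_all only: r1_def r2_def r3_def power_divide)
  moreover have "r1^2 + r2^2 + r3^2 = (r1 + r2 + r3)^2 - 2*(r1*r2 + r1*r3 + r2*r3)"
    and "r1^2*r2^2 + r1^2*r3^2 + r2^2*r3^2
      = (r1*r2 + r1*r3 + r2*r3)^2 - 2*(r1 + r2 + r3)*(r1*r2*r3)"
    and "r1^2*r2^2*r3^2 = (r1*r2*r3)^2"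
    by algebra+
  ultimately show ?thesis
    unfolding line_roots_def sym using v by (simp add: field_simps, algebra)
qed

lemma isog2_pt_add_off_origin:
  assumes ns: "two_torsion_only_origin a b" and nonsquare: "\<forall>x. x^2 \<noteq> b"
    and c1: "y1^2 = x1^3 + a*x1^2 + b*x1" and c2: "y2^2 = x2^3 + a*x2^2 + b*x2"
    and l1: "y1 = l*x1 + v" and l2: "y2 = l*x2 + v" and roots: "line_roots a b l v x1 x2 x3"
    and v: "v \<noteq> 0"
  shows "isog2 b (Pt x3 (- (l*x3 + v))) =
    pt_add (-2*a) (a^2 - 4*b) (isog2 b (Pt x1 y1)) (isog2 b (Pt x2 y2))"
proof -
  have x1: "x1 \<noteq> 0" and x2: "x2 \<noteq> 0" and x3: "x3 \<noteq> 0"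
    using roots v unfolding line_roots_def by auto
  define L where "L = (v*l - b)/v"
  define M where "M = (v^2 - a*v*l + b*l^2)/v"
  define X where "X x = (l*x + v)^2/x^2" for x
  have image: "isog2 b (Pt x (l*x + v)) = Pt (X x) (L * X x + M)"
    if "x \<noteq> 0" "(l*x + v)^2 = x^3 + a*x^2 + b*x" for x
    using isog2_on_line[OF that(2) refl that(1) v] that(1)
    unfolding isog2_def X_def L_def M_def by simp
  define y3 where "y3 = l*x3 + v"
  have "y3^2 = x3^3 + a*x3^2 + b*x3" unfolding y3_def by (rule line_roots_on_curve[OF roots])
  then have "isog2 b (Pt x3 y3) = Pt (X x3) (L * X x3 + M)" using image[OF x3] by (simp add: y3_def)
  then have "isog2 b (Pt x3 (- (l*x3 + v))) = Pt (X x3) (- (L * X x3 + M))"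
    using x3 unfolding y3_def[symmetric] by (simp add: isog2_def)
  also have "\<dots> = pt_add (-2*a) (a^2 - 4*b) (Pt (X x1) (L * X x1 + M)) (Pt (X x2) (L * X x2 + M))"
  proof (rule pt_add_line_roots[symmetric])
    show "two_torsion_only_origin (-2*a) (a^2 - 4*b)" by (rule two_torsion_only_origin_isog2[OF ns nonsquare])
    show "(L * X x1 + M)^2 = X x1^3 + (-2*a) * X x1^2 + (a^2 - 4*b) * X x1"
      using on_curve_isog2[of a b "Pt x1 y1"] image[of x1] c1 x1 l1 by (simp add: on_curve_Pt)
    show "line_roots (-2*a) (a^2 - 4*b) L M (X x1) (X x2) (X x3)"
      unfolding L_def M_def X_def by (rule isog2_line_roots[OF roots x1 x2 x3 v])
  qed simp_all
  also have "\<dots> = pt_add (-2*a) (a^2 - 4*b) (isog2 b (Pt x1 y1)) (isog2 b (Pt x2 y2))"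
    using image[of x1] image[of x2] c1 c2 x1 x2 l1 l2 by simp
  finally show ?thesis .
qed

lemma isog2_pt_add:
  assumes ns: "two_torsion_only_origin a b" and nonsquare: "\<forall>x. x^2 \<noteq> b"
    and P: "on_curve a b P" and Q: "on_curve a b Q"
  shows "isog2 b (pt_add a b P Q) = pt_add (-2*a) (a^2 - 4*b) (isog2 b P) (isog2 b Q)"
proof (cases P)
  case (Pt x1 y1)
  show ?thesis
  proof (cases Q)
    case (Pt x2 y2)
    have c1: "y1^2 = x1^3 + a*x1^2 + b*x1" and c2: "y2^2 = x2^3 + a*x2^2 + b*x2"
      using P Q \<open>P = Pt x1 y1\<close> Pt by (simp_all add: on_curve_Pt)
    show ?thesis
    proof (cases "x1 = x2 \<and> y1 = - y2")
      case True
      then show ?thesis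
        using \<open>P = Pt x1 y1\<close> Pt pt_add_opposite by (auto simp: isog2_def pt_add_def)
    next
      case False
      obtain l v x3 where l1: "y1 = l*x1 + v" and l2: "y2 = l*x2 + v"
        and roots: "line_roots a b l v x1 x2 x3"
        and sum: "pt_add a b (Pt x1 y1) (Pt x2 y2) = Pt x3 (- (l*x3 + v))"
        using pt_add_line[OF c1 c2 False] .
      show ?thesis
      proof (cases "v = 0")
        case True
        have "x1 \<noteq> 0 \<or> x2 \<noteq> 0" using False l1 l2 True by auto
        then show ?thesis
          using isog2_pt_add_origin_line[of b a l x1 x2 x3] ns roots sum l1 l2 True
            \<open>P = Pt x1 y1\<close> Pt by (simp add: two_torsion_only_origin_def)
      next
        case False
        then show ?thesis
          using isog2_pt_add_off_origin[OF ns nonsquare c1 c2 l1 l2 roots] sum \<open>P = Pt x1 y1\<close> Pt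
          by simp
      qed
    qed
  qed simp
qed simp

definition scale :: "rat \<Rightarrow> point \<Rightarrow> point" where
  "scale u P = (case P of Inf \<Rightarrow> Inf | Pt x y \<Rightarrow> Pt (u^2*x) (u^3*y))"

lemma on_curve_scale: "on_curve a b P \<Longrightarrow> on_curve (u^2*a) (u^4*b) (scale u P)"
proof (cases P)
  case (Pt x y)
  assume "on_curve a b P"
  then have "y^2 = x^3 + a*x^2 + b*x" using Pt by (simp add: on_curve_Pt)
  then have "(u^3*y)^2 = (u^2*x)^3 + (u^2*a)*(u^2*x)^2 + (u^4*b)*(u^2*x)" by algebra
  then show ?thesis using Pt by (simp add: scale_def on_curve_Pt)
qed (simp add: scale_def)

lemma scale_pt_add:
  assumes ns: "two_torsion_only_origin (u^2*a) (u^4*b)" and P: "on_curve a b P" and Q: "on_curve a b Q"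
  shows "scale u (pt_add a b P Q) = pt_add (u^2*a) (u^4*b) (scale u P) (scale u Q)"
proof (cases P)
  case (Pt x1 y1)
  show ?thesis
  proof (cases Q)
    case (Pt x2 y2)
    have c1: "y1^2 = x1^3 + a*x1^2 + b*x1" and c2: "y2^2 = x2^3 + a*x2^2 + b*x2"
      using P Q \<open>P = Pt x1 y1\<close> Pt by (simp_all add: on_curve_Pt)
    show ?thesis
    proof (cases "x1 = x2 \<and> y1 = - y2")
      case False
      obtain l v x3 where l1: "y1 = l*x1 + v" and l2: "y2 = l*x2 + v"
        and roots: "line_roots a b l v x1 x2 x3"
        and sum: "pt_add a b (Pt x1 y1) (Pt x2 y2) = Pt x3 (- (l*x3 + v))"
        using pt_add_line[OF c1 c2 False] .
      have "pt_add (u^2*a) (u^4*b) (Pt (u^2*x1) (u^3*y1)) (Pt (u^2*x2) (u^3*y2)) =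
          Pt (u^2*x3) (- ((u*l)*(u^2*x3) + u^3*v))"
      proof (rule pt_add_line_roots[OF ns])
        show "(u^3*y1)^2 = (u^2*x1)^3 + (u^2*a)*(u^2*x1)^2 + (u^4*b)*(u^2*x1)"
          using c1 by algebra
        show "u^3*y1 = (u*l)*(u^2*x1) + u^3*v" "u^3*y2 = (u*l)*(u^2*x2) + u^3*v"
          unfolding l1 l2 by algebra+
        show "line_roots (u^2*a) (u^4*b) (u*l) (u^3*v) (u^2*x1) (u^2*x2) (u^2*x3)"
          using roots unfolding line_roots_def by (elim conjE) (intro conjI; algebra)
      qed
      moreover have "- ((u*l)*(u^2*x3) + u^3*v) = u^3 * (- (l*x3 + v))" by algebra
      ultimately show ?thesis using sum \<open>P = Pt x1 y1\<close> Pt by (simp add: scale_def)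
    qed (use \<open>P = Pt x1 y1\<close> Pt in \<open>simp add: pt_add_def scale_def\<close>)
  qed (simp add: scale_def)
qed (simp add: scale_def)

section \<open>The \<open>p\<close>-adic formal group\<close>

text \<open>In the coordinates \<open>t = x/y\<close>, \<open>s = 1/y\<close> around the point at infinity the curve reads
  \<open>s = t\<^sup>3 + a t\<^sup>2 s + b t s\<^sup>2\<close>, and \<open>t\<close> is the parameter of the formal group.\<close>

definition tparam :: "point \<Rightarrow> rat" where
  "tparam P = (case P of Inf \<Rightarrow> 0 | Pt x y \<Rightarrow> x / y)"

definition in_filtration :: "int \<Rightarrow> int \<Rightarrow> point \<Rightarrow> bool" where
  "in_filtration p N P = (case P of Inf \<Rightarrow> True
     | Pt x y \<Rightarrow> y \<noteq> 0 \<and> val_ge p (x / y) N \<and> val_ge p (1 / y) (3 * N))"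

lemma curve_at_infinity:
  fixes a b x y :: rat
  assumes c: "y^2 = x^3 + a*x^2 + b*x" and y: "y \<noteq> 0"
  shows "1/y = (x/y)^3 + a*(x/y)^2*(1/y) + b*(x/y)*(1/y)^2"
proof -
  have "(1/y - ((x/y)^3 + a*(x/y)^2*(1/y) + b*(x/y)*(1/y)^2)) * y^3 = y^2 - x^3 - a*x^2 - b*x"
    using y by (simp add: field_simps power2_eq_square power3_eq_cube)
  then show ?thesis using c y by simp
qed

text \<open>For two points of \<open>s = t\<^sup>3 + a t\<^sup>2 s + b t s\<^sup>2\<close>, the slope \<open>(s\<^sub>2 - s\<^sub>1)/(t\<^sub>2 - t\<^sub>1)\<close> of their chord
  is \<open>chord_num / chord_den\<close>; for \<open>p\<close>-adically small \<open>t, s\<close> the denominator is a unit.\<close>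

definition chord_num :: "rat \<Rightarrow> rat \<Rightarrow> rat \<Rightarrow> rat \<Rightarrow> rat \<Rightarrow> rat" where
  "chord_num a b t1 t2 s2 = t1^2 + t1*t2 + t2^2 + a*(t1 + t2)*s2 + b*s2^2"

definition chord_den :: "rat \<Rightarrow> rat \<Rightarrow> rat \<Rightarrow> rat \<Rightarrow> rat \<Rightarrow> rat" where
  "chord_den a b t1 s1 s2 = 1 - a*t1^2 - b*t1*(s1 + s2)"

lemma chord_identity:
  assumes "s1 = t1^3 + a*t1^2*s1 + b*t1*s1^2" "s2 = t2^3 + a*t2^2*s2 + b*t2*s2^2"
  shows "(s2 - s1) * chord_den a b t1 s1 s2 = (t2 - t1) * chord_num a b t1 t2 s2"
proof -
  have "(s2 - s1) * chord_den a b t1 s1 s2 - (t2 - t1) * chord_num a b t1 t2 s2 =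
      (s2 - (t2^3 + a*t2^2*s2 + b*t2*s2^2)) - (s1 - (t1^3 + a*t1^2*s1 + b*t1*s1^2))"
    unfolding chord_den_def chord_num_def by algebra
  then show ?thesis using assms by simp
qed

lemma tangent_identity:
  assumes c: "y^2 = x^3 + a*x^2 + b*x" and y: "y \<noteq> 0" and line: "y = l*x + v"
    and tangent: "3*x^2 + 2*a*x + b = 2*l*y"
  shows "v * chord_num a b (x/y) (x/y) (1/y) = - l * chord_den a b (x/y) (1/y) (1/y)"
proof -
  define t where "t = x/y"
  define s where "s = 1/y"
  have ht: "t*y = x" and hs: "s*y = 1" unfolding t_def s_def using y by simp_all
  have "(v * chord_num a b t t s + l * chord_den a b t s s) * y^2 =
      v*(3*(t*y)^2 + 2*a*(t*y)*(s*y) + b*(s*y)^2) + l*(y^2 - a*(t*y)^2 - 2*b*(t*y)*(s*y))"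
    unfolding chord_num_def chord_den_def by algebra
  also have "\<dots> = v*(3*x^2 + 2*a*x + b) + l*(y^2 - a*x^2 - 2*b*x)"
    unfolding ht hs by simp
  also have "\<dots> = 0" using c line tangent by algebra
  finally have "(v * chord_num a b t t s + l * chord_den a b t s s) * y^2 = 0" .
  then show ?thesis unfolding t_def[symmetric] s_def[symmetric] using y by algebra
qed

lemma tparam_vieta:
  assumes roots: "line_roots a b l v x1 x2 x3"
    and l1: "y1 = l*x1 + v" and l2: "y2 = l*x2 + v" and l3: "y3 = l*x3 + v"
    and y1: "y1 \<noteq> 0" and y2: "y2 \<noteq> 0" and y3: "y3 \<noteq> 0"
  shows "x1/y1 + x2/y2 + x3/y3 = - (a*v - 2*b*l) / (v^2 - a*l*v + b*l^2)"
proof -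
  have e1: "x1 + x2 + x3 = l^2 - a" and e2: "x1*x2 + x1*x3 + x2*x3 = b - 2*l*v"
    and e3: "x1*x2*x3 = v^2"
    using roots unfolding line_roots_def by simp_all
  have prod: "y1*y2*y3 = v*(v^2 - a*l*v + b*l^2)"
    unfolding l1 l2 l3 using e1 e2 e3 by algebra
  have "x1*y2*y3 + x2*y1*y3 + x3*y1*y2 = - v*(a*v - 2*b*l)"
    unfolding l1 l2 l3 using e1 e2 e3 by algebra
  moreover define T where "T = x1/y1 + x2/y2 + x3/y3"
  then have "T * (y1*y2*y3) = x1*y2*y3 + x2*y1*y3 + x3*y1*y2"
    using y1 y2 y3 by (simp add: field_simps)
  ultimately have "v * (T * (v^2 - a*l*v + b*l^2) + (a*v - 2*b*l)) = 0"
    unfolding prod by algebra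
  moreover have "v \<noteq> 0" "v^2 - a*l*v + b*l^2 \<noteq> 0" using prod y1 y2 y3 by auto
  ultimately have "T * (v^2 - a*l*v + b*l^2) = - (a*v - 2*b*l)" by simp
  then have "T = - (a*v - 2*b*l) / (v^2 - a*l*v + b*l^2)"
    using \<open>v^2 - a*l*v + b*l^2 \<noteq> 0\<close> by (simp add: eq_divide_eq)
  then show ?thesis unfolding T_def .
qed

lemma chord_slope_identity:
  assumes c1: "y1^2 = x1^3 + a*x1^2 + b*x1" and c2: "y2^2 = x2^3 + a*x2^2 + b*x2"
    and y1: "y1 \<noteq> 0" and y2: "y2 \<noteq> 0"
    and l1: "y1 = l*x1 + v" and l2: "y2 = l*x2 + v" and roots: "line_roots a b l v x1 x2 x3"
    and den: "chord_den a b (x1/y1) (1/y1) (1/y2) \<noteq> 0"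
  shows "v * chord_num a b (x1/y1) (x2/y2) (1/y2) + l * chord_den a b (x1/y1) (1/y1) (1/y2) = 0"
proof (cases "x1 = x2")
  case False
  define num where "num = chord_num a b (x1/y1) (x2/y2) (1/y2)"
  define den' where "den' = chord_den a b (x1/y1) (1/y1) (1/y2)"
  have on_line: "l*(x/y) + v*(1/y) = 1" if "y = l*x + v" "y \<noteq> 0" for x y
  proof -
    have "l*(x/y) + v*(1/y) = (l*x + v)/y" by (simp add: add_divide_distrib)
    then show ?thesis using that(2) unfolding that(1)[symmetric] by simp
  qed
  have chord: "(1/y2 - 1/y1) * den' = (x2/y2 - x1/y1) * num"
    unfolding num_def den'_def
    using curve_at_infinity[OF c1 y1] curve_at_infinity[OF c2 y2] by (rule chord_identity)
  have "x2/y2 \<noteq> x1/y1"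
  proof
    assume t: "x2/y2 = x1/y1"
    then have "y2 = y1" using chord den unfolding den'_def by simp
    then show False using t False y1 by simp
  qed
  moreover have "(x2/y2 - x1/y1) * (v*num + l*den') = 0"
    using chord on_line[OF l1 y1] on_line[OF l2 y2] by algebra
  ultimately show ?thesis unfolding num_def den'_def by simp
next
  case True
  have e1: "x1 + x2 + x3 = l^2 - a" and e2: "x1*x2 + x1*x3 + x2*x3 = b - 2*l*v"
    using roots unfolding line_roots_def by simp_all
  have "3*x1^2 + 2*a*x1 + b = 2*l*y1" using e1 e2 True l1 by algebra
  then show ?thesis using tangent_identity[OF c1 y1 l1] True l1 l2 by simp
qed

lemma third_point_at_infinity:
  assumes ns: "two_torsion_only_origin a b" and roots: "line_roots a b l v x1 x2 x3"
    and l1: "y1 = l*x1 + v" and l2: "y2 = l*x2 + v" and l3: "y3 = l*x3 + v"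
    and y1: "y1 \<noteq> 0" and y2: "y2 \<noteq> 0" and v: "v \<noteq> 0"
  shows "y3 \<noteq> 0" "x3/(- y3) = x1/y1 + x2/y2 + (a*v - 2*b*l) / (v^2 - a*l*v + b*l^2)"
    "1/(- y3) = - ((l/v) * (x3/(- y3))) - 1/v"
proof -
  show y3: "y3 \<noteq> 0"
  proof
    assume "y3 = 0"
    then have "x3 * (x3^2 + a*x3 + b) = 0"
      using line_roots_on_curve[OF roots] unfolding l3 by algebra
    then have "x3 = 0" using ns unfolding two_torsion_only_origin_def by auto
    then show False using roots v unfolding line_roots_def by simp
  qed
  have "x1/y1 + x2/y2 + x3/y3 = - ((a*v - 2*b*l) / (v^2 - a*l*v + b*l^2))"
    using tparam_vieta[OF roots l1 l2 l3 y1 y2 y3] unfolding minus_divide_left .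
  then show "x3/(- y3) = x1/y1 + x2/y2 + (a*v - 2*b*l) / (v^2 - a*l*v + b*l^2)"
    unfolding divide_minus_right by linarith
  have "- (l/v) * (x3/(- y3)) - 1/v = (l*x3 - y3)/(v*y3)"
    using y3 v by (simp add: field_simps)
  also have "l*x3 - y3 = - v" unfolding l3 by simp
  finally show "1/(- y3) = - ((l/v) * (x3/(- y3))) - 1/v"
    using y3 v by simp
qed

context prime_valuation
begin

lemma chord_den_unit:
  assumes a: "val_ge p a 0" and b: "val_ge p b 0" and N: "1 \<le> N"
    and t1: "val_ge p t1 N" and s1: "val_ge p s1 (3*N)" and s2: "val_ge p s2 (3*N)"
  shows "rat_val p (chord_den a b t1 s1 s2) = 0" "chord_den a b t1 s1 s2 \<noteq> 0"
proof -
  have "val_ge p (a*t1^2) (0 + (N + N))"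
    using val_ge_mult[OF a val_ge_mult[OF t1 t1]] by (simp add: power2_eq_square)
  moreover have "val_ge p (b*t1*(s1 + s2)) (0 + N + 3*N)"
    using val_ge_mult[OF val_ge_mult[OF b t1] val_ge_add[OF s1 s2]] by simp
  ultimately have "val_ge p (- (a*t1^2) - b*t1*(s1 + s2)) 1"
    using N by (intro val_ge_diff val_ge_uminus) (auto elim: val_ge_mono)
  moreover have "chord_den a b t1 s1 s2 = 1 + (- (a*t1^2) - b*t1*(s1 + s2))"
    unfolding chord_den_def by simp
  ultimately show "rat_val p (chord_den a b t1 s1 s2) = 0" "chord_den a b t1 s1 s2 \<noteq> 0"
    using one_plus_unit by simp_all
qed

lemma val_ge_chord_num:
  assumes a: "val_ge p a 0" and b: "val_ge p b 0" and N: "1 \<le> N"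
    and t1: "val_ge p t1 N" and t2: "val_ge p t2 N" and s2: "val_ge p s2 (3*N)"
  shows "val_ge p (chord_num a b t1 t2 s2) (2*N)"
proof -
  have "val_ge p (t1^2) (N + N)" "val_ge p (t1*t2) (N + N)" "val_ge p (t2^2) (N + N)"
    using val_ge_mult[OF t1 t1] val_ge_mult[OF t1 t2] val_ge_mult[OF t2 t2]
    by (simp_all add: power2_eq_square)
  moreover have "val_ge p (a*(t1 + t2)*s2) (0 + N + 3*N)"
    using val_ge_mult[OF val_ge_mult[OF a val_ge_add[OF t1 t2]] s2] .
  moreover have "val_ge p (b*s2^2) (0 + (3*N + 3*N))"
    using val_ge_mult[OF b val_ge_mult[OF s2 s2]] by (simp add: power2_eq_square)
  ultimately show ?thesis
    unfolding chord_num_def using N by (intro val_ge_add) (auto elim: val_ge_mono)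
qed

lemma filtration_slope:
  assumes a: "val_ge p a 0" and b: "val_ge p b 0" and N: "1 \<le> N"
    and c1: "y1^2 = x1^3 + a*x1^2 + b*x1" and c2: "y2^2 = x2^3 + a*x2^2 + b*x2"
    and y1: "y1 \<noteq> 0" and y2: "y2 \<noteq> 0"
    and t1: "val_ge p (x1/y1) N" and s1: "val_ge p (1/y1) (3*N)"
    and t2: "val_ge p (x2/y2) N" and s2: "val_ge p (1/y2) (3*N)"
    and l1: "y1 = l*x1 + v" and l2: "y2 = l*x2 + v" and roots: "line_roots a b l v x1 x2 x3"
  shows "v \<noteq> 0" "val_ge p (l/v) (2*N)"
proof -
  define num where "num = chord_num a b (x1/y1) (x2/y2) (1/y2)"
  define den where "den = chord_den a b (x1/y1) (1/y1) (1/y2)"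
  have den: "den \<noteq> 0" "rat_val p den = 0"
    unfolding den_def using chord_den_unit[OF a b N t1 s1 s2] by simp_all
  have slope: "v*num + l*den = 0"
    using chord_slope_identity[OF c1 c2 y1 y2 l1 l2 roots] den(1) unfolding num_def den_def .
  show v: "v \<noteq> 0"
  proof
    assume "v = 0"
    then have "l = 0" using slope den by simp
    then show False using l1 y1 \<open>v = 0\<close> by simp
  qed
  have "l/v = - (num/den)" using slope v den by (simp add: field_simps)
  moreover have "val_ge p (num/den) (2*N)"
    unfolding num_def using val_ge_chord_num[OF a b N t1 t2 s2] den by (intro val_ge_divide_unit)
  ultimately show "val_ge p (l/v) (2*N)" by (simp add: val_ge_uminus)
qed

lemma val_ge_vieta_correction:
  assumes a: "val_ge p a 0" and b: "val_ge p b 0" and N: "1 \<le> N" and v: "v \<noteq> 0"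
    and al: "val_ge p (l/v) (2*N)" and be: "val_ge p (1/v) (3*N)"
  shows "val_ge p ((a*v - 2*b*l) / (v^2 - a*l*v + b*l^2)) (3*N)"
proof -
  define E where "E = 1 + (b*(l/v)^2 - a*(l/v))"
  have "val_ge p (b*(l/v)^2) (0 + (2*N + 2*N))" "val_ge p (a*(l/v)) (0 + 2*N)"
    using val_ge_mult[OF b val_ge_mult[OF al al]] val_ge_mult[OF a al]
    by (simp_all add: power2_eq_square)
  then have "val_ge p (b*(l/v)^2 - a*(l/v)) 1"
    using N by (intro val_ge_diff) (auto elim: val_ge_mono)
  then have E: "E \<noteq> 0" "rat_val p E = 0" unfolding E_def using one_plus_unit by simp_all
  have "val_ge p (2*b*(l/v)) (0 + 0 + 2*N)"
    using val_ge_mult[OF val_ge_mult[OF val_ge_of_int[of 2] b] al] by simp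
  then have "val_ge p (a - 2*b*(l/v)) 0"
    using N by (intro val_ge_diff a) (auto elim: val_ge_mono)
  then have "val_ge p ((1/v) * (a - 2*b*(l/v))) (3*N)" using val_ge_mult[OF be] by fastforce
  from val_ge_divide_unit[OF this E] have "val_ge p ((1/v) * (a - 2*b*(l/v)) / E) (3*N)" .
  moreover have "E * v^2 = v^2 - a*l*v + b*l^2"
    unfolding E_def using v by (simp add: field_simps power2_eq_square)
  then have "(a*v - 2*b*l) / (v^2 - a*l*v + b*l^2) = (1/v) * (a - 2*b*(l/v)) / E"
    using v E by (simp add: field_simps power2_eq_square)
  ultimately show ?thesis by simp
qed

lemma filtration_pt_add_Pt:
  assumes a: "val_ge p a 0" and b: "val_ge p b 0" and ns: "two_torsion_only_origin a b" and N: "1 \<le> N"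
    and c1: "y1^2 = x1^3 + a*x1^2 + b*x1" and c2: "y2^2 = x2^3 + a*x2^2 + b*x2"
    and y1: "y1 \<noteq> 0" and y2: "y2 \<noteq> 0"
    and t1: "val_ge p (x1/y1) N" and s1: "val_ge p (1/y1) (3*N)"
    and t2: "val_ge p (x2/y2) N" and s2: "val_ge p (1/y2) (3*N)"
  shows "in_filtration p N (pt_add a b (Pt x1 y1) (Pt x2 y2)) \<and>
    val_ge p (tparam (pt_add a b (Pt x1 y1) (Pt x2 y2)) - x1/y1 - x2/y2) (3*N)"
proof (cases "x1 = x2 \<and> y1 = - y2")
  case True
  then show ?thesis by (simp add: pt_add_def in_filtration_def tparam_def)
next
  case False
  obtain l v x3 where l1: "y1 = l*x1 + v" and l2: "y2 = l*x2 + v"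
    and roots: "line_roots a b l v x1 x2 x3"
    and sum: "pt_add a b (Pt x1 y1) (Pt x2 y2) = Pt x3 (- (l*x3 + v))"
    using pt_add_line[OF c1 c2 False] .
  note slope = filtration_slope[OF a b N c1 c2 y1 y2 t1 s1 t2 s2 l1 l2 roots]
  have "1/y1 + (l/v)*(x1/y1) = (l*x1 + v)/(v*y1)" using y1 slope(1) by (simp add: field_simps)
  then have "1/v = 1/y1 + (l/v)*(x1/y1)" using y1 unfolding l1[symmetric] by simp
  moreover have "val_ge p ((l/v)*(x1/y1)) (3*N)" using val_ge_mult[OF slope(2) t1] by simp
  ultimately have be: "val_ge p (1/v) (3*N)" using val_ge_add[OF s1] by simp
  define y3 where "y3 = l*x3 + v"
  note third = third_point_at_infinity[OF ns roots l1 l2 y3_def y1 y2 slope(1)]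
  define ga where "ga = (a*v - 2*b*l) / (v^2 - a*l*v + b*l^2)"
  have ga: "val_ge p ga (3*N)"
    unfolding ga_def using val_ge_vieta_correction[OF a b N slope be] .
  have t3: "x3/(- y3) = x1/y1 + x2/y2 + ga" unfolding ga_def by (rule third(2))
  have "val_ge p (x1/y1 + x2/y2 + ga) N"
    using N by (intro val_ge_add t1 t2) (auto intro: val_ge_mono[OF ga])
  then have t3_val: "val_ge p (x3/(- y3)) N" unfolding t3 .
  have "val_ge p ((l/v) * (x3/(- y3))) (3*N)"
    by (rule val_ge_mono[OF val_ge_mult[OF slope(2) t3_val]]) simp
  then have "val_ge p (1/(- y3)) (3*N)"
    unfolding third(3) by (intro val_ge_diff val_ge_uminus be)
  then show ?thesis
    using sum third(1) t3 ga t3_val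
    unfolding y3_def[symmetric] by (simp add: in_filtration_def tparam_def)
qed

lemma filtration_pt_add:
  assumes a: "val_ge p a 0" and b: "val_ge p b 0" and ns: "two_torsion_only_origin a b" and N: "1 \<le> N"
    and P: "on_curve a b P" "in_filtration p N P" and Q: "on_curve a b Q" "in_filtration p N Q"
  shows "in_filtration p N (pt_add a b P Q) \<and>
    val_ge p (tparam (pt_add a b P Q) - tparam P - tparam Q) (3*N)"
proof (cases P)
  case (Pt x1 y1)
  show ?thesis
  proof (cases Q)
    case (Pt x2 y2)
    show ?thesis
      using filtration_pt_add_Pt[OF a b ns N, of y1 x1 y2 x2] P Q \<open>P = Pt x1 y1\<close> Pt
      by (simp add: on_curve_Pt in_filtration_def tparam_def)
  qed (use P in \<open>simp add: tparam_def\<close>)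
qed (use Q in \<open>simp add: tparam_def\<close>)

lemma filtration_pow:
  assumes a: "val_ge p a 0" and b: "val_ge p b 0" and ns: "two_torsion_only_origin a b" and N: "1 \<le> N"
    and P: "on_curve a b P" "in_filtration p N P"
  shows "in_filtration p N (pow (mw_group a b) P k) \<and>
    val_ge p (tparam (pow (mw_group a b) P k) - of_nat k * tparam P) (3*N)"
proof (induction k)
  case 0
  then show ?case by (simp add: in_filtration_def tparam_def)
next
  case (Suc k)
  let ?Q = "pow (mw_group a b) P k"
  have "in_filtration p N (pt_add a b ?Q P) \<and>
      val_ge p (tparam (pt_add a b ?Q P) - tparam ?Q - tparam P) (3*N)"
    using filtration_pt_add[OF a b ns N on_curve_pow[OF P(1)] _ P] Suc by blast
  then have "in_filtration p N (pt_add a b ?Q P)"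
    "val_ge p (tparam (pt_add a b ?Q P) - tparam ?Q - tparam P + (tparam ?Q - of_nat k * tparam P)) (3*N)"
    using Suc val_ge_add by blast+
  then show ?case by (simp add: mw_group_pow_Suc algebra_simps)
qed

lemma pole_in_filtration:
  assumes a: "val_ge p a 0" and b: "val_ge p b 0" and c: "y^2 = x^3 + a*x^2 + b*x"
    and x: "x \<noteq> 0" and pole: "rat_val p x < 0"
  shows "y \<noteq> 0" "rat_val p x = - 2 * rat_val p (x/y)"
    "in_filtration p (rat_val p (x/y)) (Pt x y)"
proof -
  have x3: "x^3 \<noteq> 0" and vx3: "rat_val p (x^3) = 3 * rat_val p x"
    using x rat_val_power[OF x, of 3] by simp_all
  have "val_ge p (a*x^2) (0 + rat_val p (x^2))" "val_ge p (b*x) (0 + rat_val p x)"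
    using val_ge_mult[OF a val_ge_rat_val] val_ge_mult[OF b val_ge_rat_val] by blast+
  then have "val_ge p (a*x^2 + b*x) (rat_val p (x^3) + 1)"
    using vx3 pole rat_val_power[OF x, of 2] by (intro val_ge_add) (auto elim: val_ge_mono)
  then have "rat_val p (y^2) = 3 * rat_val p x" "y^2 \<noteq> 0"
    using val_ge_add_dominant[OF x3] vx3 c by (simp_all add: add.assoc)
  then show y: "y \<noteq> 0" and "rat_val p x = - 2 * rat_val p (x/y)"
    using rat_val_power[of y 2] rat_val_divide[OF x] by auto
  then show "in_filtration p (rat_val p (x/y)) (Pt x y)"
    using rat_val_divide[of 1 y] rat_val_divide[OF x y]
    by (simp add: in_filtration_def val_ge_def)
qed

text \<open>The formal group is not torsion-free when \<open>p = 2\<close>; the depth \<open>N \<ge> k > v\<^sub>p(k)\<close> of the point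
  is what rules out \<open>k\<close>-torsion.\<close>

lemma deep_pole_not_torsion:
  assumes a: "val_ge p a 0" and b: "val_ge p b 0" and ns: "two_torsion_only_origin a b"
    and c: "on_curve a b (Pt x y)" and x: "x \<noteq> 0" and k: "0 < k"
    and pole: "rat_val p x \<le> - 2 * int k"
  shows "pow (mw_group a b) (Pt x y) k \<noteq> Inf"
proof
  assume torsion: "pow (mw_group a b) (Pt x y) k = Inf"
  define N where "N = rat_val p (x/y)"
  have c': "y^2 = x^3 + a*x^2 + b*x" using c by (simp add: on_curve_Pt)
  have "rat_val p x < 0" using pole k by simp
  note deep = pole_in_filtration[OF a b c' x this, folded N_def]
  have "int k \<le> N" "1 \<le> N" using deep(2) pole k by (auto simp: N_def)
  have "val_ge p (- (of_nat k * (x/y))) (3*N)"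
    using filtration_pow[OF a b ns \<open>1 \<le> N\<close> c deep(3), of k] torsion by (simp add: tparam_def)
  moreover have "x/y \<noteq> 0" using x deep(1) by simp
  ultimately have "3*N \<le> rat_val p (of_nat k) + N"
    using k rat_val_mult[of "of_nat k" "x/y"] by (auto simp: val_ge_def N_def)
  then show False using rat_val_of_nat_less[OF k] \<open>int k \<le> N\<close> by linarith
qed

end

section \<open>The curves \<open>E\<^sub>n\<close>\<close>

interpretation two: prime_valuation 2
  by standard simp

lemma rat_square_ne_two: "(x::rat)^2 \<noteq> 2"
proof
  assume sq: "x^2 = 2"
  then have "x \<noteq> 0" by auto
  then have "2 * rat_val 2 x = 1"
    using two.rat_val_power[of x 2] two.rat_val_self sq by simp
  then show False by presburger
qed

lemma odd_square_mod_8: "odd (z::int) \<Longrightarrow> 8 dvd z^2 - 1"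
proof -
  assume "odd z"
  then obtain k where k: "z = 2*k + 1" by (rule oddE)
  obtain m where m: "k*(k + 1) = 2*m" by (metis evenE even_mult_iff even_plus_one_iff)
  have "z^2 - 1 = 4*(k*(k + 1))" unfolding k by algebra
  then show ?thesis unfolding m by simp
qed

lemma two_adic_unit_square:
  assumes u: "u \<noteq> 0" "rat_val 2 u = 0"
  shows "val_ge 2 (u^2 - 1) 3"
proof -
  obtain a b where ab: "quotient_of u = (a, b)" by (cases "quotient_of u") auto
  have b: "b > 0" and u_eq: "u = of_int a / of_int b" and cop: "coprime a b"
    using quotient_of_denom_pos[OF ab] quotient_of_div[OF ab] quotient_of_coprime[OF ab] by auto
  have a: "a \<noteq> 0" using u u_eq by auto
  have "odd a \<and> odd b"
  proof (rule ccontr)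
    assume "\<not> (odd a \<and> odd b)"
    then have "1 \<le> multiplicity 2 a \<or> 1 \<le> multiplicity 2 b"
      using a b by (auto intro: multiplicity_geI)
    moreover have "multiplicity 2 a = multiplicity 2 b"
      using u(2) unfolding rat_val_def ab by simp
    ultimately have "2 dvd a" "2 dvd b"
      using multiplicity_dvd'[of 1 2 a] multiplicity_dvd'[of 1 2 b] by auto
    then have "is_unit (2::int)" by (rule coprime_common_divisor[OF cop])
    then show False by simp
  qed
  then have "8 dvd (a^2 - 1) - (b^2 - 1)" using odd_square_mod_8 by (blast intro: dvd_diff)
  then have dvd: "2^3 dvd a^2 - b^2" by simp
  have u2: "u^2 - 1 = of_int (a^2 - b^2) / of_int (b^2)"
    using b unfolding u_eq by (simp add: field_simps power2_eq_square)
  show ?thesis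
  proof (cases "a^2 - b^2 = 0")
    case False
    have "3 \<le> multiplicity 2 (a^2 - b^2)" using dvd False by (intro multiplicity_geI) auto
    moreover have "multiplicity 2 (b^2) = 0"
      using \<open>odd a \<and> odd b\<close> by (intro not_dvd_imp_multiplicity_0) simp
    ultimately show ?thesis
      using two.rat_val_of_int_divide[of "a^2 - b^2" "b^2"] False b u2 by (simp add: val_ge_def)
  qed (simp add: u2)
qed

lemma two_torsion_only_origin_En:
  assumes "n \<noteq> 0"
  shows "two_torsion_only_origin (2*n) (- (n^2))"
proof -
  have "x^2 + (2*n)*x + (- (n^2)) \<noteq> 0" for x
  proof
    assume "x^2 + (2*n)*x + (- (n^2)) = 0"
    then have "(x + n)^2 = 2*n^2" by algebra
    then have "((x + n)/n)^2 = 2" using assms by (simp add: power_divide)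
    then show False using rat_square_ne_two by blast
  qed
  then show ?thesis using assms unfolding two_torsion_only_origin_def by simp
qed

lemma two_torsion_only_origin_isog2_En:
  assumes "n \<noteq> 0"
  shows "two_torsion_only_origin (-4*n) (8*n^2)"
proof -
  have "x^2 + (-4*n)*x + 8*n^2 \<noteq> 0" for x
  proof
    assume "x^2 + (-4*n)*x + 8*n^2 = 0"
    then have "(x - 2*n)^2 + 4*n^2 = 0" by algebra
    moreover have "(x - 2*n)^2 \<ge> 0" "4*n^2 > 0" using assms by simp_all
    ultimately show False by linarith
  qed
  then show ?thesis using assms unfolding two_torsion_only_origin_def by simp
qed

lemma En_isog2_coefficients:
  fixes n :: rat
  shows "-2*(2*n) = -4*n" "(2*n)^2 - 4*(- (n^2)) = 8*n^2"
    "-2*(-4*n) = 8*n" "(-4*n)^2 - 4*(8*n^2) = -16*n^2"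
    "(1/2)^2*(8*n) = 2*n" "(1/2)^4*(-16*n^2) = - (n^2)"
  by algebra+

text \<open>It is \<open>P \<mapsto> \<plusminus>2P\<close>, but as a composite of
  homomorphisms it is seen to be one without knowing that \<open>pt_add\<close> is associative.\<close>

definition double_isog :: "rat \<Rightarrow> point \<Rightarrow> point" where
  "double_isog n P = scale (1/2) (isog2 (8*n^2) (isog2 (- (n^2)) P))"

lemma double_isog_Inf [simp]: "double_isog n Inf = Inf"
  by (simp add: double_isog_def scale_def)

lemma on_curve_isog2_En:
  "on_curve (2*n) (- (n^2)) P \<Longrightarrow> on_curve (-4*n) (8*n^2) (isog2 (- (n^2)) P)"
  using on_curve_isog2[of "2*n" "- (n^2)" P] unfolding En_isog2_coefficients .

lemma on_curve_isog2_isog2_En: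
  "on_curve (-4*n) (8*n^2) P \<Longrightarrow> on_curve (8*n) (-16*n^2) (isog2 (8*n^2) P)"
  using on_curve_isog2[of "-4*n" "8*n^2" P] unfolding En_isog2_coefficients .

lemma on_curve_double_isog:
  "on_curve (2*n) (- (n^2)) P \<Longrightarrow> on_curve (2*n) (- (n^2)) (double_isog n P)"
  unfolding double_isog_def
  using on_curve_scale[OF on_curve_isog2_isog2_En[OF on_curve_isog2_En], of n P "1/2"]
  unfolding En_isog2_coefficients .

lemma double_isog_pt_add:
  assumes n: "n \<noteq> 0" and P: "on_curve (2*n) (- (n^2)) P" and Q: "on_curve (2*n) (- (n^2)) Q"
  shows "double_isog n (pt_add (2*n) (- (n^2)) P Q) =
    pt_add (2*n) (- (n^2)) (double_isog n P) (double_isog n Q)"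
proof -
  have nonsquare1: "\<forall>x. x^2 \<noteq> - (n^2)"
  proof
    fix x :: rat
    have "x^2 \<ge> 0" "- (n^2) < 0" using n by simp_all
    then show "x^2 \<noteq> - (n^2)" by linarith
  qed
  have nonsquare2: "\<forall>x. x^2 \<noteq> 8*n^2"
  proof (intro allI notI)
    fix x assume "x^2 = 8*n^2"
    then have "(x/(2*n))^2 = 2" using n by (simp add: power_divide power_mult_distrib)
    then show False using rat_square_ne_two by blast
  qed
  have ns3: "two_torsion_only_origin ((1/2)^2*(8*n)) ((1/2)^4*(-16*n^2))"
    unfolding En_isog2_coefficients by (rule two_torsion_only_origin_En[OF n])
  show ?thesis
    unfolding double_isog_def
    using isog2_pt_add[OF two_torsion_only_origin_En[OF n] nonsquare1 P Q]
      isog2_pt_add[OF two_torsion_only_origin_isog2_En[OF n] nonsquare2 on_curve_isog2_En[OF P]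
        on_curve_isog2_En[OF Q]]
      scale_pt_add[OF ns3 on_curve_isog2_isog2_En[OF on_curve_isog2_En[OF P]]
        on_curve_isog2_isog2_En[OF on_curve_isog2_En[OF Q]]]
    unfolding En_isog2_coefficients by simp
qed

lemma double_isog_pow:
  fixes k :: nat
  assumes n: "n \<noteq> 0" and P: "on_curve (2*n) (- (n^2)) P"
  shows "double_isog n (pow (mw_group (2*n) (- (n^2))) P k) =
    pow (mw_group (2*n) (- (n^2))) (double_isog n P) k"
  by (induction k)
    (simp_all add: mw_group_pow_Suc double_isog_pt_add[OF n on_curve_pow[OF P] P])

lemma double_isog_Pt:
  assumes n: "n \<noteq> 0" and c: "on_curve (2*n) (- (n^2)) (Pt x y)" and x: "x \<noteq> 0"
  shows "y \<noteq> 0" "\<exists>y'. double_isog n (Pt x y) = Pt ((x^2 + n^2)^2/(4*y^2)) y'"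
proof -
  have "y^2 = x^3 + (2*n)*x^2 + (- (n^2))*x" using c by (simp add: on_curve_Pt)
  then have "y^2 = x * (x^2 + (2*n)*x + (- (n^2)))" by algebra
  moreover have "x^2 + (2*n)*x + (- (n^2)) \<noteq> 0" using two_torsion_only_origin_En[OF n] unfolding two_torsion_only_origin_def by blast
  ultimately show y: "y \<noteq> 0" using x by auto
  define X where "X = y^2/x^2"
  define Y where "Y = y*(x^2 - - (n^2))/x^2"
  have "X \<noteq> 0" unfolding X_def using x y by simp
  then have "double_isog n (Pt x y) = scale (1/2) (Pt (Y^2/X^2) (Y*(X^2 - 8*n^2)/X^2))"
    using x unfolding double_isog_def X_def Y_def by (simp add: isog2_def)
  moreover have "(1/2)^2 * (Y^2/X^2) = (x^2 + n^2)^2/(4*y^2)"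
    unfolding X_def Y_def using x y by (simp add: field_simps power2_eq_square)
  ultimately show "\<exists>y'. double_isog n (Pt x y) = Pt ((x^2 + n^2)^2/(4*y^2)) y'"
    by (simp add: scale_def)
qed

lemma rat_val_2_balanced:
  assumes n: "n \<noteq> 0" and x: "x \<noteq> 0" and same: "rat_val 2 x = rat_val 2 n"
  shows "rat_val 2 (x^2 + n^2) = 2 * rat_val 2 n + 1"
    "rat_val 2 (x^2 + 2*n*x - n^2) = 2 * rat_val 2 n + 1"
proof -
  define u where "u = x / n"
  have xu: "x = n * u" unfolding u_def using n by simp
  have u: "u \<noteq> 0" "rat_val 2 u = 0"
    using x n same two.rat_val_divide[OF x n] unfolding u_def by simp_all
  have sq: "val_ge 2 (u^2 - 1) 3" by (rule two_adic_unit_square[OF u])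
  have n2: "n^2 \<noteq> 0" "rat_val 2 (n^2) = 2 * rat_val 2 n"
    using n two.rat_val_power[OF n, of 2] by simp_all
  have v2: "rat_val 2 2 = 1" "rat_val 2 (2*u) = 1"
    using two.rat_val_self two.rat_val_mult[of 2 u] u by simp_all
  have "rat_val 2 (2 + (u^2 - 1)) = 1" "2 + (u^2 - 1) \<noteq> 0"
    using two.val_ge_add_dominant[of 2 "u^2 - 1"] two.val_ge_mono[OF sq] v2 by simp_all
  moreover have "x^2 + n^2 = n^2 * (2 + (u^2 - 1))" unfolding xu by algebra
  ultimately show "rat_val 2 (x^2 + n^2) = 2 * rat_val 2 n + 1"
    using two.rat_val_mult n2 by simp
  have "rat_val 2 (2*u + (u^2 - 1)) = 1" "2*u + (u^2 - 1) \<noteq> 0"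
    using two.val_ge_add_dominant[of "2*u" "u^2 - 1"] two.val_ge_mono[OF sq] v2 u by simp_all
  moreover have "x^2 + 2*n*x - n^2 = n^2 * (2*u + (u^2 - 1))" unfolding xu by algebra
  ultimately show "rat_val 2 (x^2 + 2*n*x - n^2) = 2 * rat_val 2 n + 1"
    using two.rat_val_mult n2 by simp
qed

lemma rat_val_2_unbalanced:
  assumes n: "n \<noteq> 0" and x: "x \<noteq> 0" and ne: "rat_val 2 x \<noteq> rat_val 2 n"
  shows "rat_val 2 (x^2 + n^2) = 2 * min (rat_val 2 x) (rat_val 2 n)"
    "rat_val 2 (x^2 + 2*n*x - n^2) = 2 * min (rat_val 2 x) (rat_val 2 n)"
proof -
  define i where "i = rat_val 2 x"
  define j where "j = rat_val 2 n"
  have x2: "x^2 \<noteq> 0" "rat_val 2 (x^2) = 2*i"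
    using x two.rat_val_power[OF x, of 2] unfolding i_def by simp_all
  have n2: "n^2 \<noteq> 0" "- (n^2) \<noteq> 0" "rat_val 2 (n^2) = 2*j"
    using n two.rat_val_power[OF n, of 2] unfolding j_def by simp_all
  have nx: "val_ge 2 (2*n*x) (1 + j + i)"
    using two.val_ge_mult[OF two.val_ge_mult[OF two.val_ge_rat_val[of 2] two.val_ge_rat_val[of n]]
      two.val_ge_rat_val[of x]] two.rat_val_self unfolding i_def j_def by simp
  have "rat_val 2 (x^2 + n^2) = 2 * min i j \<and> rat_val 2 (x^2 + 2*n*x - n^2) = 2 * min i j"
  proof (cases "i < j")
    case True
    have "val_ge 2 (n^2) (2*i + 1)" using n2 True by (simp add: val_ge_def)
    moreover have "val_ge 2 (2*n*x) (2*i + 1)" using two.val_ge_mono[OF nx] True by simp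
    ultimately have "val_ge 2 (n^2) (rat_val 2 (x^2) + 1)"
      "val_ge 2 (2*n*x - n^2) (rat_val 2 (x^2) + 1)"
      using x2 by (simp_all add: two.val_ge_diff)
    then have "rat_val 2 (x^2 + n^2) = 2*i" "rat_val 2 (x^2 + (2*n*x - n^2)) = 2*i"
      using two.val_ge_add_dominant(1)[OF x2(1)] x2 by simp_all
    then show ?thesis using True by (simp add: add_diff_eq)
  next
    case False
    then have "j < i" using ne unfolding i_def j_def by simp
    have "val_ge 2 (x^2) (2*j + 1)" using x2 \<open>j < i\<close> by (simp add: val_ge_def)
    moreover have "val_ge 2 (2*n*x) (2*j + 1)" using two.val_ge_mono[OF nx] \<open>j < i\<close> by simp
    ultimately have "val_ge 2 (x^2) (rat_val 2 (n^2) + 1)"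
      "val_ge 2 (x^2 + 2*n*x) (rat_val 2 (- (n^2)) + 1)"
      using n2 by (simp_all add: two.val_ge_add)
    then have "rat_val 2 (n^2 + x^2) = 2*j" "rat_val 2 (- (n^2) + (x^2 + 2*n*x)) = 2*j"
      using two.val_ge_add_dominant(1)[OF n2(1)] two.val_ge_add_dominant(1)[OF n2(2)] n2
      by simp_all
    then show ?thesis using \<open>j < i\<close> by (simp add: add.commute)
  qed
  then show "rat_val 2 (x^2 + n^2) = 2 * min (rat_val 2 x) (rat_val 2 n)"
    "rat_val 2 (x^2 + 2*n*x - n^2) = 2 * min (rat_val 2 x) (rat_val 2 n)"
    unfolding i_def j_def by simp_all
qed

text \<open>With \<open>A = x\<^sup>2 + n\<^sup>2\<close>, \<open>B = x\<^sup>2 + 2nx - n\<^sup>2\<close> and \<open>y\<^sup>2 = x B\<close>, the valuation of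
  \<open>A\<^sup>2/(4y\<^sup>2)\<close> is \<open>2 v(A) - 2 - v(x) - v(B)\<close>.\<close>

lemma rat_val_double_isog_x:
  assumes n: "n \<noteq> 0" and x: "x \<noteq> 0" and y: "y \<noteq> 0"
    and c: "y^2 = x^3 + (2*n)*x^2 + (- (n^2))*x"
  shows "rat_val 2 ((x^2 + n^2)^2/(4*y^2)) < min (rat_val 2 x) (rat_val 2 n)"
proof -
  define A where "A = x^2 + n^2"
  define B where "B = x^2 + 2*n*x - n^2"
  have y2: "y^2 = x * B" unfolding B_def using c by algebra
  have A: "A \<noteq> 0" unfolding A_def using n by (simp add: add_nonneg_pos)
  have B: "B \<noteq> 0" using y2 y by auto
  have "rat_val 2 4 = 2" using two.rat_val_power[of 2 2] two.rat_val_self by simp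
  then have "rat_val 2 ((x^2 + n^2)^2/(4*y^2)) = 2 * rat_val 2 A - 2 - rat_val 2 x - rat_val 2 B"
    using A B x y two.rat_val_divide two.rat_val_mult two.rat_val_power
    unfolding A_def[symmetric] y2 by (simp add: power2_eq_square)
  moreover have "rat_val 2 (y^2) = rat_val 2 x + rat_val 2 B"
    unfolding y2 using x B two.rat_val_mult by simp
  moreover have "rat_val 2 (y^2) = 2 * rat_val 2 y" using two.rat_val_power[OF y, of 2] by simp
  moreover have "rat_val 2 A = rat_val 2 B \<and> rat_val 2 B \<le> 2 * min (rat_val 2 x) (rat_val 2 n) + 1"
    using rat_val_2_balanced[OF n x] rat_val_2_unbalanced[OF n x] unfolding A_def B_def
    by (cases "rat_val 2 x = rat_val 2 n") simp_all
  ultimately show ?thesis by auto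
qed

lemma double_isog_iterate:
  assumes n: "n \<noteq> 0" and c: "on_curve (2*n) (- (n^2)) (Pt x y)" and x: "x \<noteq> 0"
  shows "\<exists>x' y'. (double_isog n ^^ j) (Pt x y) = Pt x' y' \<and> x' \<noteq> 0 \<and>
    on_curve (2*n) (- (n^2)) (Pt x' y') \<and>
    min (rat_val 2 x') (rat_val 2 n) \<le> min (rat_val 2 x) (rat_val 2 n) - int j"
proof (induction j)
  case 0
  then show ?case using c x by simp
next
  case (Suc j)
  then obtain x' y' where P': "(double_isog n ^^ j) (Pt x y) = Pt x' y'" "x' \<noteq> 0"
    "on_curve (2*n) (- (n^2)) (Pt x' y')"
    "min (rat_val 2 x') (rat_val 2 n) \<le> min (rat_val 2 x) (rat_val 2 n) - int j"
    by blast
  define x'' where "x'' = (x'^2 + n^2)^2/(4*y'^2)"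
  have y': "y' \<noteq> 0" by (rule double_isog_Pt(1)[OF n P'(3,2)])
  obtain y'' where P'': "double_isog n (Pt x' y') = Pt x'' y''"
    using double_isog_Pt(2)[OF n P'(3,2)] unfolding x''_def by blast
  have "x'' \<noteq> 0" unfolding x''_def using y' n by (simp add: add_nonneg_pos)
  moreover have "on_curve (2*n) (- (n^2)) (Pt x'' y'')"
    using on_curve_double_isog[OF P'(3)] P'' by simp
  moreover have "rat_val 2 x'' < min (rat_val 2 x') (rat_val 2 n)"
    unfolding x''_def using rat_val_double_isog_x[OF n P'(2) y'] P'(3) by (simp add: on_curve_Pt)
  ultimately show ?case using P'(1,4) P'' by fastforce
qed

lemma double_isog_iterate_torsion:
  fixes k :: nat
  assumes n: "n \<noteq> 0" and P: "on_curve (2*n) (- (n^2)) P"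
    and torsion: "pow (mw_group (2*n) (- (n^2))) P k = Inf"
  shows "pow (mw_group (2*n) (- (n^2))) ((double_isog n ^^ j) P) k = Inf"
proof -
  have curve: "on_curve (2*n) (- (n^2)) ((double_isog n ^^ j) P)" for j
    by (induction j) (simp_all add: P on_curve_double_isog)
  show ?thesis
  proof (induction j)
    case (Suc j)
    then show ?case using double_isog_pow[OF n curve[of j], of k] by simp
  qed (simp add: torsion)
qed

lemma En_torsion_points:
  fixes n :: int and k :: nat
  assumes n: "n \<noteq> 0" and P: "on_curve (2 * of_int n) (- (of_int n ^ 2)) P" and k: "0 < k"
    and torsion: "pow (mw_group (2 * of_int n) (- (of_int n ^ 2))) P k = Inf"
  shows "P = Inf \<or> P = Pt 0 0"
proof (cases P)
  case (Pt x y)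
  show ?thesis
  proof (cases "x = 0")
    case True
    then show ?thesis using P Pt by (simp add: on_curve_Pt)
  next
    case False
    define nr :: rat where "nr = of_int n"
    have nr: "nr \<noteq> 0" "0 \<le> rat_val 2 nr"
      using n two.val_ge_of_int[of n] unfolding nr_def by (simp_all add: val_ge_def)
    define j where "j = nat (min (rat_val 2 x) (rat_val 2 nr) + 2 * int k)"
    obtain x' y' where P': "(double_isog nr ^^ j) (Pt x y) = Pt x' y'" "x' \<noteq> 0"
      "on_curve (2*nr) (- (nr^2)) (Pt x' y')"
      "min (rat_val 2 x') (rat_val 2 nr) \<le> min (rat_val 2 x) (rat_val 2 nr) - int j"
      using double_isog_iterate[OF nr(1), of x y j] P Pt False unfolding nr_def by blast
    have "rat_val 2 x' \<le> - 2 * int k" using P'(4) nr(2) k unfolding j_def by linarith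
    moreover have "val_ge 2 (2*nr) 0" "val_ge 2 (- (nr^2)) 0"
      using two.val_ge_of_int[of "2*n"] two.val_ge_of_int[of "- (n^2)"] unfolding nr_def by simp_all
    ultimately have "pow (mw_group (2*nr) (- (nr^2))) (Pt x' y') k \<noteq> Inf"
      using two.deep_pole_not_torsion two_torsion_only_origin_En[OF nr(1)] P'(2,3) k by blast
    moreover have "pow (mw_group (2*nr) (- (nr^2))) (Pt x' y') k = Inf"
      using double_isog_iterate_torsion[OF nr(1), of P k j] P Pt torsion P'(1)
      unfolding nr_def by simp
    ultimately show ?thesis by contradiction
  qed
qed simp

lemma carrier_torsion_subgroup_En:
  fixes n :: int
  assumes "n \<noteq> 0"
  shows "carrier (torsion_subgroup (E n)) = {Inf, Pt 0 0}"
proof -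
  have "\<exists>k::nat. 0 < k \<and> pow (E n) P k = Inf" if "P \<in> {Inf, Pt 0 0}" for P
  proof -
    have "pow (E n) P (2::nat) = Inf"
      using that unfolding E_def numeral_2_eq_2 by (auto simp: mw_group_pow_Suc pt_add_def)
    then show ?thesis by (intro exI[of _ 2]) simp
  qed
  then show ?thesis
    using En_torsion_points[OF assms]
    unfolding torsion_subgroup_def by (auto simp: E_def on_curve_Pt)
qed

lemma torsion_subgroup_iso_Z2:
  assumes carrier: "carrier (torsion_subgroup (mw_group a b)) = {Inf, Pt 0 0}"
  shows "torsion_subgroup (mw_group a b) \<cong> integer_mod_group 2"
proof -
  define h :: "point \<Rightarrow> int" where "h P = (if P = Inf then 0 else 1)" for P
  have "pt_add a b (Pt 0 0) (Pt 0 0) = Inf" by (simp add: pt_add_def)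
  then have "h \<in> iso (torsion_subgroup (mw_group a b)) (integer_mod_group 2)"
    unfolding iso_def hom_def bij_betw_def carrier carrier_integer_mod_group
    by (auto simp: h_def torsion_subgroup_def inj_on_def image_def)
  then show ?thesis by (rule is_isoI)
qed

theorem lemma2p4:
  fixes n :: int
  assumes "n \<noteq> 0"
  shows "torsion_subgroup (E n) \<cong> integer_mod_group 2"
  using torsion_subgroup_iso_Z2 carrier_torsion_subgroup_En[OF assms] unfolding E_def by simp

end
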